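(* Assume each bus has either no generator or at least two generators, and $x^*_n>0$ for all $n$; let $b^*_n=2a_nx^*_n+c_n$. Consider any execution of the Bid Adjustment Algorithm with $0<\beta_k<2a_n$ for all $n$ and $k\ge1$, and let $a_{\min}=\min_na_n$ and $\bar y=\sum_{i=1}^{N_b}y_i$. Then for all $k\ge1$, $$\|b(k+1)-b(k)\|^2\ \le\ \frac{\beta_k^2}{2a_{\min}^2}\|b(k)-b^*\|^2+8\beta_k^2\bar y^2.$$
   Context: Network: directed graph with buses $\{1,\dots,N_b\}$, edge set $\mathcal E$, line flow limits $\bar z_{ij}>0$, $G_i$ the set of generators at bus $i$ (the $G_i$ partition $\{1,\dots,N\}$), loads $y_i\ge0$. Generator $n$ has cost $f_n(x)=a_nx^2+c_nx$, $a_n>0$, $c_n\ge0$. DC-OPF: minimize $\sum_n f_n(x_n)$ over $(x,z)$ s.t. $\sum_{j:(i,j)\in\mathcal E}z_{ij}-\sum_{j:(j,i)\in\mathcal E}z_{ji}=\sum_{n\in G_i}x_n-y_i$ for all $i$, $|z_{ij}|\le\bar z_{ij}$, $x\ge0$; assumed feasible with unique optimal generation $x^*$. S-DC-OPF given bids $b\ge0$: same constraints, objective $\sum_n b_nx_n$. $\|\cdot\|$ is the Euclidean norm. Bid Adjustment Algorithm: given stepsizes $\beta_k>0$, each generator picks $b_n(1)\ge c_n$. For each $k\ge1$: $q_n(k)=\arg\max_{q\ge0}(b_n(k)q-f_n(q))$; the operator selects an optimizer $(x^{\rm opt}(k),z^{\rm opt}(k))$ of S-DC-OPF with bids $b(k)$;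 and $b_n(k+1)=[\,b_n(k)+\beta_k(x^{\rm opt}_n(k)-q_n(k))\,]^+$, where $[u]^+=\max\{0,u\}$. *)

theory Defs
  imports Complex_Main
begin

text \<open>Buses are 1..Nb, generators are 1..N. Edges are pairs of buses (directed),
flows z are indexed by edges, generation vectors x by generator indices.\<close>

definition gen_cost :: "(nat \<Rightarrow> real) \<Rightarrow> (nat \<Rightarrow> real) \<Rightarrow> nat \<Rightarrow> real \<Rightarrow> real" where
  "gen_cost a c n x = a n * x\<^sup>2 + c n * x"

definition opf_feasible ::
  "nat \<Rightarrow> nat \<Rightarrow> (nat \<times> nat) set \<Rightarrow> (nat \<times> nat \<Rightarrow> real) \<Rightarrow> (nat \<Rightarrow> nat set) \<Rightarrow> (nat \<Rightarrow> real)
   \<Rightarrow> (nat \<Rightarrow> real) \<Rightarrow> (nat \<times> nat \<Rightarrow> real) \<Rightarrow> bool" where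
  "opf_feasible Nb N E zbar G y x z \<longleftrightarrow>
     (\<forall>i\<in>{1..Nb}. (\<Sum>e\<in>{e\<in>E. fst e = i}. z e) - (\<Sum>e\<in>{e\<in>E. snd e = i}. z e)
                   = (\<Sum>n\<in>G i. x n) - y i) \<and>
     (\<forall>e\<in>E. \<bar>z e\<bar> \<le> zbar e) \<and>
     (\<forall>n\<in>{1..N}. 0 \<le> x n)"

definition dcopf_optimal ::
  "nat \<Rightarrow> nat \<Rightarrow> (nat \<times> nat) set \<Rightarrow> (nat \<times> nat \<Rightarrow> real) \<Rightarrow> (nat \<Rightarrow> nat set) \<Rightarrow> (nat \<Rightarrow> real)
   \<Rightarrow> (nat \<Rightarrow> real) \<Rightarrow> (nat \<Rightarrow> real) \<Rightarrow> (nat \<Rightarrow> real) \<Rightarrow> bool" where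
  "dcopf_optimal Nb N E zbar G y a c x \<longleftrightarrow>
     (\<exists>z. opf_feasible Nb N E zbar G y x z \<and>
        (\<forall>x' z'. opf_feasible Nb N E zbar G y x' z' \<longrightarrow>
           (\<Sum>n\<in>{1..N}. gen_cost a c n (x n)) \<le> (\<Sum>n\<in>{1..N}. gen_cost a c n (x' n))))"

definition sdcopf_optimal ::
  "nat \<Rightarrow> nat \<Rightarrow> (nat \<times> nat) set \<Rightarrow> (nat \<times> nat \<Rightarrow> real) \<Rightarrow> (nat \<Rightarrow> nat set) \<Rightarrow> (nat \<Rightarrow> real)
   \<Rightarrow> (nat \<Rightarrow> real) \<Rightarrow> (nat \<Rightarrow> real) \<Rightarrow> (nat \<times> nat \<Rightarrow> real) \<Rightarrow> bool" where
  "sdcopf_optimal Nb N E zbar G y b x z \<longleftrightarrow>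
     opf_feasible Nb N E zbar G y x z \<and>
     (\<forall>x' z'. opf_feasible Nb N E zbar G y x' z' \<longrightarrow>
        (\<Sum>n\<in>{1..N}. b n * x n) \<le> (\<Sum>n\<in>{1..N}. b n * x' n))"

definition vnorm :: "nat \<Rightarrow> (nat \<Rightarrow> real) \<Rightarrow> real" where
  "vnorm N v = sqrt (\<Sum>n\<in>{1..N}. (v n)\<^sup>2)"

end

theory Submission
  imports Defs
begin

text \<open>Generator n answers a bid b with the supply max 0 ((b - c_n) / (2 a_n)), which is
1/(2 a_n)-Lipschitz in the bid and equals x*_n at the marginal-cost bid b*_n.  Since the
projection onto b >= 0 is nonexpansive, |b_n(k+1) - b_n(k)| <= beta_k |xopt_n(k) - q_n(k)|, and
splitting xopt - q = (xopt - x*) + (x* - q) bounds the second part by |b(k) - b*| / (2 a_min).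
The first part is controlled because xopt(k) and x* are both nonnegative and feasible, hence
both have total generation equal to the total load: the edge flows cancel in the sum of the
bus balances.\<close>

definition best_response :: "real \<Rightarrow> real \<Rightarrow> real \<Rightarrow> real" where
  "best_response a c b = max 0 ((b - c) / (2 * a))"

lemma is_arg_max_profit_eq_best_response:
  fixes a b c q :: real
  assumes "0 < a" and "is_arg_max (\<lambda>s. b * s - (a * s\<^sup>2 + c * s)) (\<lambda>s. 0 \<le> s) q"
  shows "q = best_response a c b"
proof -
  let ?profit = "\<lambda>s. b * s - (a * s\<^sup>2 + c * s)"
  define p where "p = best_response a c b"
  have "p \<ge> 0" and "q \<ge> 0" and "?profit p \<le> ?profit q"
    using assms(2) by (auto simp: p_def best_response_def is_arg_max_def not_less)
  have "?profit p - ?profit q \<ge> a * (p - q)\<^sup>2"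
  proof (cases "c \<le> b")
    case True
    then have "b - c = 2 * a * p"
      using \<open>0 < a\<close> by (simp add: p_def best_response_def field_simps)
    then show ?thesis by (simp add: algebra_simps power2_eq_square)
  next
    case False
    then have "p = 0"
      using \<open>0 < a\<close> by (simp add: p_def best_response_def divide_neg_pos)
    moreover have "(b - c) * q \<le> 0"
      using False \<open>q \<ge> 0\<close> by (simp add: mult_nonpos_nonneg)
    ultimately show ?thesis by (simp add: algebra_simps power2_eq_square)
  qed
  with \<open>?profit p \<le> ?profit q\<close> have "a * (p - q)\<^sup>2 \<le> 0" by linarith
  with \<open>0 < a\<close> have "p = q" by (simp add: mult_le_0_iff)
  then show ?thesis by (simp add: p_def)
qed

lemma best_response_marginal_cost:
  assumes "0 < a" and "0 \<le> x"
  shows "best_response a c (2 * a * x + c) = x"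
  using assms by (simp add: best_response_def)

lemma best_response_lipschitz:
  assumes "0 < a"
  shows "\<bar>best_response a c b - best_response a c b'\<bar> \<le> \<bar>b - b'\<bar> / (2 * a)"
proof -
  have "\<bar>best_response a c b - best_response a c b'\<bar> \<le> \<bar>(b - c) / (2 * a) - (b' - c) / (2 * a)\<bar>"
    unfolding best_response_def by (auto simp: max_def)
  also have "\<dots> = \<bar>b - b'\<bar> / (2 * a)"
    using assms by (simp add: diff_divide_distrib[symmetric])
  finally show ?thesis .
qed

lemma abs_max_0_add_minus_le:
  fixes u d :: real
  assumes "0 \<le> u"
  shows "\<bar>max 0 (u + d) - u\<bar> \<le> \<bar>d\<bar>"
  using assms by (simp add: max_def abs_if)

lemma power2_bid_step_le:
  fixes a c b x x' \<beta> m :: real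
  assumes "0 < m" "m \<le> a" "0 \<le> b" "0 \<le> x'"
  shows "(max 0 (b + \<beta> * (x - best_response a c b)) - b)\<^sup>2
           \<le> \<beta>\<^sup>2 * (2 * (x - x')\<^sup>2 + (b - (2 * a * x' + c))\<^sup>2 / (2 * m\<^sup>2))"
proof -
  let ?q = "best_response a c b" and ?b' = "2 * a * x' + c"
  have "0 < a" using assms by simp
  have "\<bar>x' - ?q\<bar> \<le> \<bar>b - ?b'\<bar> / (2 * a)"
    using best_response_lipschitz[OF \<open>0 < a\<close>, of c ?b' b]
      best_response_marginal_cost[OF \<open>0 < a\<close> \<open>0 \<le> x'\<close>]
    by (simp add: abs_minus_commute)
  also have "\<dots> \<le> \<bar>b - ?b'\<bar> / (2 * m)"
    using assms by (intro divide_left_mono) auto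
  finally have "(x' - ?q)\<^sup>2 \<le> (\<bar>b - ?b'\<bar> / (2 * m))\<^sup>2"
    using power_mono[of _ _ 2] by fastforce
  then have x'_q: "2 * (x' - ?q)\<^sup>2 \<le> (b - ?b')\<^sup>2 / (2 * m\<^sup>2)"
    by (simp add: power_divide power_mult_distrib)
  have "(max 0 (b + \<beta> * (x - ?q)) - b)\<^sup>2 \<le> (\<beta> * (x - ?q))\<^sup>2"
    using abs_max_0_add_minus_le[OF \<open>0 \<le> b\<close>] unfolding abs_le_square_iff .
  also have "\<dots> = \<beta>\<^sup>2 * (x - ?q)\<^sup>2" by (simp add: power_mult_distrib)
  also have "\<dots> \<le> \<beta>\<^sup>2 * (2 * (x - x')\<^sup>2 + 2 * (x' - ?q)\<^sup>2)"
    using sum_power2_ge_zero[of "(x - x') - (x' - ?q)" 0]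
    by (intro mult_left_mono) (simp_all add: power2_eq_square algebra_simps)
  also have "\<dots> \<le> \<beta>\<^sup>2 * (2 * (x - x')\<^sup>2 + (b - ?b')\<^sup>2 / (2 * m\<^sup>2))"
    using x'_q by (intro mult_left_mono) auto
  finally show ?thesis .
qed

lemma opf_feasible_total_generation:
  assumes edges: "E \<subseteq> {1..Nb} \<times> {1..Nb}"
    and G_sub: "\<forall>i\<in>{1..Nb}. G i \<subseteq> {1..N}"
    and G_disj: "\<forall>i\<in>{1..Nb}. \<forall>j\<in>{1..Nb}. i \<noteq> j \<longrightarrow> G i \<inter> G j = {}"
    and G_cover: "(\<Union>i\<in>{1..Nb}. G i) = {1..N}"
    and feasible: "opf_feasible Nb N E zbar G y x z"
  shows "(\<Sum>n\<in>{1..N}. x n) = (\<Sum>i\<in>{1..Nb}. y i)"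
proof -
  have "finite E" using edges finite_subset by blast
  have balance: "\<forall>i\<in>{1..Nb}. (\<Sum>n\<in>G i. x n)
      = y i + ((\<Sum>e\<in>{e\<in>E. fst e = i}. z e) - (\<Sum>e\<in>{e\<in>E. snd e = i}. z e))"
    using feasible unfolding opf_feasible_def by auto
  have "(\<Sum>n\<in>{1..N}. x n) = (\<Sum>i\<in>{1..Nb}. \<Sum>n\<in>G i. x n)"
    unfolding G_cover[symmetric]
    by (rule sum.UNION_disjoint) (use G_sub G_disj finite_subset[of _ "{1..N}"] in auto)
  also have "\<dots> = (\<Sum>i\<in>{1..Nb}. y i) + ((\<Sum>i\<in>{1..Nb}. \<Sum>e\<in>{e\<in>E. fst e = i}. z e)
                                      - (\<Sum>i\<in>{1..Nb}. \<Sum>e\<in>{e\<in>E. snd e = i}. z e))"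
    using balance by (simp add: sum.distrib sum_subtractf)
  also have "(\<Sum>i\<in>{1..Nb}. \<Sum>e\<in>{e\<in>E. fst e = i}. z e) = (\<Sum>e\<in>E. z e)"
    by (rule sum.group) (use \<open>finite E\<close> edges in auto)
  also have "(\<Sum>i\<in>{1..Nb}. \<Sum>e\<in>{e\<in>E. snd e = i}. z e) = (\<Sum>e\<in>E. z e)"
    by (rule sum.group) (use \<open>finite E\<close> edges in auto)
  finally show ?thesis by simp
qed

lemma sum_power2_le_power2_sum:
  fixes d :: "'a \<Rightarrow> real"
  assumes "finite A" and "\<forall>n\<in>A. 0 \<le> d n"
  shows "(\<Sum>n\<in>A. (d n)\<^sup>2) \<le> (\<Sum>n\<in>A. d n)\<^sup>2"
proof -
  have "(\<Sum>n\<in>A. (d n)\<^sup>2) \<le> (\<Sum>n\<in>A. d n * (\<Sum>m\<in>A. d m))"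
    unfolding power2_eq_square
    by (intro sum_mono mult_left_mono member_le_sum) (use assms in auto)
  also have "\<dots> = (\<Sum>n\<in>A. d n)\<^sup>2" by (simp add: power2_eq_square sum_distrib_right)
  finally show ?thesis .
qed

lemma sum_power2_diff_le_power2_sum_add:
  fixes u v :: "'a \<Rightarrow> real"
  assumes "finite A" and "\<forall>n\<in>A. 0 \<le> u n" and "\<forall>n\<in>A. 0 \<le> v n"
  shows "(\<Sum>n\<in>A. (u n - v n)\<^sup>2) \<le> (sum u A + sum v A)\<^sup>2"
proof -
  have "(\<Sum>n\<in>A. (u n - v n)\<^sup>2) \<le> (\<Sum>n\<in>A. \<bar>u n - v n\<bar>)\<^sup>2"
    using sum_power2_le_power2_sum[OF \<open>finite A\<close>, of "\<lambda>n. \<bar>u n - v n\<bar>"] by simp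
  also have "\<dots> \<le> (\<Sum>n\<in>A. u n + v n)\<^sup>2"
    using assms by (intro power_mono sum_mono sum_nonneg) (auto simp: abs_le_iff)
  finally show ?thesis by (simp add: sum.distrib)
qed

lemma opf_feasible_generation_gap:
  assumes edges: "E \<subseteq> {1..Nb} \<times> {1..Nb}"
    and G_sub: "\<forall>i\<in>{1..Nb}. G i \<subseteq> {1..N}"
    and G_disj: "\<forall>i\<in>{1..Nb}. \<forall>j\<in>{1..Nb}. i \<noteq> j \<longrightarrow> G i \<inter> G j = {}"
    and G_cover: "(\<Union>i\<in>{1..Nb}. G i) = {1..N}"
    and feasible: "opf_feasible Nb N E zbar G y x z" "opf_feasible Nb N E zbar G y x' z'"
  shows "(\<Sum>n\<in>{1..N}. (x n - x' n)\<^sup>2) \<le> (2 * (\<Sum>i\<in>{1..Nb}. y i))\<^sup>2"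
proof -
  have "(\<Sum>n\<in>{1..N}. (x n - x' n)\<^sup>2) \<le> (sum x {1..N} + sum x' {1..N})\<^sup>2"
    using feasible by (intro sum_power2_diff_le_power2_sum_add) (auto simp: opf_feasible_def)
  also have "\<dots> = (2 * (\<Sum>i\<in>{1..Nb}. y i))\<^sup>2"
    using feasible[THEN opf_feasible_total_generation[OF edges G_sub G_disj G_cover]] by simp
  finally show ?thesis .
qed

lemma vnorm_power2: "(vnorm N v)\<^sup>2 = (\<Sum>n\<in>{1..N}. (v n)\<^sup>2)"
  unfolding vnorm_def by (simp add: sum_nonneg)

lemma bids_nonneg:
  fixes b :: "nat \<Rightarrow> nat \<Rightarrow> real"
  assumes "\<forall>n\<in>{1..N}. 0 \<le> c n" and "\<forall>n\<in>{1..N}. c n \<le> b 1 n"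
    and "\<forall>k'\<ge>1. \<forall>n\<in>{1..N}. b (Suc k') n = max 0 (b k' n + \<beta> k' * (x k' n - q k' n))"
    and "1 \<le> k" and "n \<in> {1..N}"
  shows "0 \<le> b k n"
proof (cases "k = 1")
  case True
  then show ?thesis using assms by force
next
  case False
  then obtain k' where "k = Suc k'" "1 \<le> k'" using \<open>1 \<le> k\<close> by (cases k) auto
  then show ?thesis using assms(3,5) by simp
qed

theorem lemma4p4:
  fixes Nb N :: nat and E :: "(nat \<times> nat) set" and zbar :: "nat \<times> nat \<Rightarrow> real"
    and G :: "nat \<Rightarrow> nat set" and y a c xstar :: "nat \<Rightarrow> real"
    and beta :: "nat \<Rightarrow> real"
    and b q xopt :: "nat \<Rightarrow> nat \<Rightarrow> real" and zopt :: "nat \<Rightarrow> nat \<times> nat \<Rightarrow> real"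
    and k :: nat
  assumes edges: "E \<subseteq> {1..Nb} \<times> {1..Nb}"
    and zbar_pos: "\<forall>e\<in>E. 0 < zbar e"
    and G_sub: "\<forall>i\<in>{1..Nb}. G i \<subseteq> {1..N}"
    and G_disj: "\<forall>i\<in>{1..Nb}. \<forall>j\<in>{1..Nb}. i \<noteq> j \<longrightarrow> G i \<inter> G j = {}"
    and G_cover: "(\<Union>i\<in>{1..Nb}. G i) = {1..N}"
    and loads: "\<forall>i\<in>{1..Nb}. 0 \<le> y i"
    and a_pos: "\<forall>n\<in>{1..N}. 0 < a n"
    and c_nonneg: "\<forall>n\<in>{1..N}. 0 \<le> c n"
    and xstar_opt: "dcopf_optimal Nb N E zbar G y a c xstar"
    and xstar_unique: "\<forall>x. dcopf_optimal Nb N E zbar G y a c x \<longrightarrow> (\<forall>n\<in>{1..N}. x n = xstar n)"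
    and bus_gens: "\<forall>i\<in>{1..Nb}. G i = {} \<or> 2 \<le> card (G i)"
    and xstar_pos: "\<forall>n\<in>{1..N}. 0 < xstar n"
    and beta_bounds: "\<forall>k'\<ge>1. \<forall>n\<in>{1..N}. 0 < beta k' \<and> beta k' < 2 * a n"
    and b_init: "\<forall>n\<in>{1..N}. c n \<le> b 1 n"
    and q_def: "\<forall>k'\<ge>1. \<forall>n\<in>{1..N}.
                  is_arg_max (\<lambda>s. b k' n * s - gen_cost a c n s) (\<lambda>s. 0 \<le> s) (q k' n)"
    and xopt_def: "\<forall>k'\<ge>1. sdcopf_optimal Nb N E zbar G y (b k') (xopt k') (zopt k')"
    and b_update: "\<forall>k'\<ge>1. \<forall>n\<in>{1..N}.
                  b (Suc k') n = max 0 (b k' n + beta k' * (xopt k' n - q k' n))"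
    and k_ge: "1 \<le> k"
  shows "(vnorm N (\<lambda>n. b (Suc k) n - b k n))\<^sup>2
           \<le> (beta k)\<^sup>2 / (2 * (Min (a ` {1..N}))\<^sup>2)
               * (vnorm N (\<lambda>n. b k n - (2 * a n * xstar n + c n)))\<^sup>2
             + 8 * (beta k)\<^sup>2 * (\<Sum>i\<in>{1..Nb}. y i)\<^sup>2"
proof -
  let ?m = "Min (a ` {1..N})" and ?Y = "\<Sum>i\<in>{1..Nb}. y i"
  let ?b_star = "\<lambda>n. 2 * a n * xstar n + c n"
  have opt_feasible: "opf_feasible Nb N E zbar G y (xopt k) (zopt k)"
    using xopt_def k_ge unfolding sdcopf_optimal_def by auto
  obtain z_star where star_feasible: "opf_feasible Nb N E zbar G y xstar z_star"
    using xstar_opt unfolding dcopf_optimal_def by auto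
  have step: "(b (Suc k) n - b k n)\<^sup>2 \<le> (beta k)\<^sup>2 * (2 * (xopt k n - xstar n)\<^sup>2
                 + (b k n - ?b_star n)\<^sup>2 / (2 * ?m\<^sup>2))" if n: "n \<in> {1..N}" for n
  proof -
    have "0 < ?m" and "?m \<le> a n" using a_pos n by auto
    moreover have "0 \<le> b k n" using bids_nonneg[OF c_nonneg b_init b_update k_ge n] .
    moreover have "0 \<le> xstar n" using star_feasible n by (simp add: opf_feasible_def)
    moreover have "q k n = best_response (a n) (c n) (b k n)"
      using q_def a_pos k_ge n by (intro is_arg_max_profit_eq_best_response) (auto simp: gen_cost_def)
    ultimately show ?thesis
      using b_update k_ge n power2_bid_step_le[where x = "xopt k n" and \<beta> = "beta k"] by simp
  qed
  have generation_gap: "(\<Sum>n\<in>{1..N}. (xopt k n - xstar n)\<^sup>2) \<le> (2 * ?Y)\<^sup>2"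
    by (rule opf_feasible_generation_gap[OF edges G_sub G_disj G_cover opt_feasible star_feasible])
  have "(\<Sum>n\<in>{1..N}. (b (Suc k) n - b k n)\<^sup>2)
      \<le> (\<Sum>n\<in>{1..N}. (beta k)\<^sup>2 * (2 * (xopt k n - xstar n)\<^sup>2
                 + (b k n - ?b_star n)\<^sup>2 / (2 * ?m\<^sup>2)))"
    by (rule sum_mono) (rule step)
  also have "\<dots> = 2 * (beta k)\<^sup>2 * (\<Sum>n\<in>{1..N}. (xopt k n - xstar n)\<^sup>2)
      + (beta k)\<^sup>2 / (2 * ?m\<^sup>2) * (\<Sum>n\<in>{1..N}. (b k n - ?b_star n)\<^sup>2)"
    by (simp add: sum.distrib sum_distrib_left sum_divide_distrib algebra_simps)
  also have "\<dots> \<le> 2 * (beta k)\<^sup>2 * (2 * ?Y)\<^sup>2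
      + (beta k)\<^sup>2 / (2 * ?m\<^sup>2) * (\<Sum>n\<in>{1..N}. (b k n - ?b_star n)\<^sup>2)"
    using generation_gap by (intro add_right_mono mult_left_mono) auto
  finally show ?thesis
    by (simp add: vnorm_power2 power_mult_distrib)
qed

end
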